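(* Let $G$ be a maximal $3$-$\gamma_{c}$-vertex critical graph, with independence number $\alpha$ and minimum degree $\delta$. Then $\alpha \leq \delta$.
   Context: All graphs are finite, simple and connected. A set $D\subseteq V(G)$ is a connected dominating set of $G$ if every vertex of $G$ is in $D$ or adjacent to a vertex of $D$, and $G[D]$ is connected. The connected domination number $\gamma_{c}(G)$ is the minimum cardinality of a connected dominating set. A graph $G$ is $k$-$\gamma_{c}$-edge critical if $\gamma_{c}(G)=k$ and $\gamma_{c}(G+uv)<k$ for every pair of non-adjacent vertices $u,v$. A $2$-connected graph $G$ is $k$-$\gamma_{c}$-vertex critical if $\gamma_{c}(G)=k$ and $\gamma_{c}(G-v)<k$ for every $v\in V(G)$. A graph is maximal $k$-$\gamma_{c}$-vertex critical if it is both $k$-$\gamma_{c}$-edge critical and $k$-$\gamma_{c}$-vertex critical. *)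

theory Defs
  imports Main
begin

definition simple_graph :: "'a set \<Rightarrow> 'a set set \<Rightarrow> bool" where
  "simple_graph V E \<longleftrightarrow> finite V \<and> (\<forall>e\<in>E. \<exists>u v. u \<in> V \<and> v \<in> V \<and> u \<noteq> v \<and> e = {u, v})"

definition adj :: "'a set set \<Rightarrow> 'a \<Rightarrow> 'a \<Rightarrow> bool" where
  "adj E u v \<longleftrightarrow> {u, v} \<in> E \<and> u \<noteq> v"

definition walk_in :: "'a set set \<Rightarrow> 'a set \<Rightarrow> 'a list \<Rightarrow> bool" where
  "walk_in E S p \<longleftrightarrow> p \<noteq> [] \<and> set p \<subseteq> S \<and> (\<forall>i. Suc i < length p \<longrightarrow> adj E (p ! i) (p ! Suc i))"

definition connected_on :: "'a set set \<Rightarrow> 'a set \<Rightarrow> bool" where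
  "connected_on E S \<longleftrightarrow> S \<noteq> {} \<and>
     (\<forall>u\<in>S. \<forall>v\<in>S. \<exists>p. walk_in E S p \<and> hd p = u \<and> last p = v)"

definition connected_graph :: "'a set \<Rightarrow> 'a set set \<Rightarrow> bool" where
  "connected_graph V E \<longleftrightarrow> simple_graph V E \<and> connected_on E V"

definition dominating :: "'a set \<Rightarrow> 'a set set \<Rightarrow> 'a set \<Rightarrow> bool" where
  "dominating V E D \<longleftrightarrow> D \<subseteq> V \<and> (\<forall>v\<in>V. v \<in> D \<or> (\<exists>d\<in>D. adj E v d))"

definition connected_dominating :: "'a set \<Rightarrow> 'a set set \<Rightarrow> 'a set \<Rightarrow> bool" where
  "connected_dominating V E D \<longleftrightarrow> dominating V E D \<and> connected_on E D"

definition gamma_c :: "'a set \<Rightarrow> 'a set set \<Rightarrow> nat" where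
  "gamma_c V E = (LEAST k. \<exists>D. connected_dominating V E D \<and> card D = k)"

definition del_vertex_edges :: "'a set set \<Rightarrow> 'a \<Rightarrow> 'a set set" where
  "del_vertex_edges E v = {e \<in> E. v \<notin> e}"

definition two_connected :: "'a set \<Rightarrow> 'a set set \<Rightarrow> bool" where
  "two_connected V E \<longleftrightarrow> connected_graph V E \<and> card V \<ge> 3 \<and>
     (\<forall>v\<in>V. connected_graph (V - {v}) (del_vertex_edges E v))"

definition edge_critical :: "nat \<Rightarrow> 'a set \<Rightarrow> 'a set set \<Rightarrow> bool" where
  "edge_critical k V E \<longleftrightarrow> connected_graph V E \<and> gamma_c V E = k \<and>
     (\<forall>u\<in>V. \<forall>v\<in>V. u \<noteq> v \<and> \<not> adj E u v \<longrightarrow> gamma_c V (insert {u, v} E) < k)"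

definition vertex_critical :: "nat \<Rightarrow> 'a set \<Rightarrow> 'a set set \<Rightarrow> bool" where
  "vertex_critical k V E \<longleftrightarrow> two_connected V E \<and> gamma_c V E = k \<and>
     (\<forall>v\<in>V. gamma_c (V - {v}) (del_vertex_edges E v) < k)"

definition maximal_vertex_critical :: "nat \<Rightarrow> 'a set \<Rightarrow> 'a set set \<Rightarrow> bool" where
  "maximal_vertex_critical k V E \<longleftrightarrow> edge_critical k V E \<and> vertex_critical k V E"

definition independent :: "'a set \<Rightarrow> 'a set set \<Rightarrow> 'a set \<Rightarrow> bool" where
  "independent V E I \<longleftrightarrow> I \<subseteq> V \<and> (\<forall>u\<in>I. \<forall>v\<in>I. \<not> adj E u v)"

definition independence_number :: "'a set \<Rightarrow> 'a set set \<Rightarrow> nat" where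
  "independence_number V E = Max {card I | I. independent V E I}"

definition degree :: "'a set \<Rightarrow> 'a set set \<Rightarrow> 'a \<Rightarrow> nat" where
  "degree V E v = card {u \<in> V. adj E v u}"

definition min_degree :: "'a set \<Rightarrow> 'a set set \<Rightarrow> nat" where
  "min_degree V E = Min (degree V E ` V)"

end

theory Submission
  imports Defs
begin

(* Fix a vertex y and an independent set I; it suffices to show card I <= deg y.
   Criticality provides two kinds of small dominating sets: for every v an edge ab, with a and b
   not adjacent to v, dominating G - v; and for non-adjacent u, v either {u, v} dominates G or
   some edge ut, with t not adjacent to v, dominates G - v.
   Call the vertices of I outside N[y] far. For two far vertices z, w the pair {z, w} does not
   dominate y, so some edge zt dominates G - w (or vice versa); then t is a neighbour of y outside I
   adjacent to every far vertex except w, a private neighbour of w. Private neighbours of distinct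
   far vertices differ and at most one far vertex has none, so choosing one private neighbour for
   each of the others injects I into N(y), except for y itself and the exceptional far vertex.
   This deficit is made up by showing that N(y) is strictly larger than the image: the chosen
   private neighbours are pairwise adjacent if they exhaust N(y) - I, whereas no neighbourhood
   is a clique, and otherwise a further neighbour of y outside the image is found. *)

lemma adj_commute: "adj E u v \<longleftrightarrow> adj E v u"
  by (auto simp: adj_def insert_commute)

lemma not_adj_self: "\<not> adj E u u"
  by (simp add: adj_def)

lemma adj_insert_edge:
  assumes "u \<noteq> v"
  shows "adj (insert {u, v} E) x y \<longleftrightarrow> adj E x y \<or> (x = u \<and> y = v) \<or> (x = v \<and> y = u)"
  using assms by (auto simp: adj_def doubleton_eq_iff)

lemma adj_del_vertex_edges:
  "adj (del_vertex_edges E v) x y \<longleftrightarrow> adj E x y \<and> x \<noteq> v \<and> y \<noteq> v"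
  by (auto simp: adj_def del_vertex_edges_def)

lemma walk_in_adj_second:
  assumes "walk_in E S p" "hd p \<noteq> last p"
  shows "adj E (hd p) (p ! 1) \<and> p ! 1 \<in> S"
proof -
  have "p \<noteq> []" "set p \<subseteq> S" "\<And>i. Suc i < length p \<Longrightarrow> adj E (p ! i) (p ! Suc i)"
    using assms(1) by (auto simp: walk_in_def)
  moreover have "length p \<ge> 2"
    using \<open>p \<noteq> []\<close> assms(2) by (cases p; cases "tl p") auto
  ultimately show ?thesis
    by (auto simp: hd_conv_nth)
qed

lemma connected_on_mono:
  assumes "connected_on E S" "\<And>u v. adj E u v \<Longrightarrow> adj E' u v"
  shows "connected_on E' S"
  using assms unfolding connected_on_def walk_in_def by meson

lemma connected_on_doubleton_adj:
  assumes "connected_on E {a, b}" "a \<noteq> b"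
  shows "adj E a b"
proof -
  obtain p where p: "walk_in E {a, b} p" "hd p = a" "last p = b"
    using assms(1) unfolding connected_on_def by blast
  then have "adj E a (p ! 1)" "p ! 1 \<in> {a, b}"
    using walk_in_adj_second[OF p(1)] assms(2) by auto
  then show ?thesis
    using not_adj_self by fastforce
qed

lemma connected_has_neighbour:
  assumes "connected_on E V" "v \<in> V" "w \<in> V" "w \<noteq> v"
  shows "\<exists>u\<in>V. adj E v u"
proof -
  obtain p where "walk_in E V p" "hd p = v" "last p = w"
    using assms unfolding connected_on_def by blast
  then show ?thesis
    using walk_in_adj_second assms(4) by metis
qed

abbreviation pair_dominates :: "'a set set \<Rightarrow> 'a set \<Rightarrow> 'a \<Rightarrow> 'a \<Rightarrow> bool" where
  "pair_dominates E S a b \<equiv> \<forall>x\<in>S. x = a \<or> x = b \<or> adj E x a \<or> adj E x b"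

lemma connected_dominating_pair:
  assumes "a \<in> V" "b \<in> V" "a = b \<or> adj E a b" "pair_dominates E V a b"
  shows "connected_dominating V E {a, b}"
proof -
  have "\<exists>p. walk_in E {a, b} p \<and> hd p = u \<and> last p = v" if "u \<in> {a, b}" "v \<in> {a, b}" for u v
  proof (cases "u = v")
    case True
    then show ?thesis
      using that by (intro exI[of _ "[u]"]) (simp add: walk_in_def)
  next
    case False
    then show ?thesis
      using that assms(3)
      by (intro exI[of _ "[u, v]"]) (auto simp: walk_in_def less_Suc_eq adj_commute)
  qed
  then have "connected_on E {a, b}"
    unfolding connected_on_def by blast
  then show ?thesis
    using assms unfolding connected_dominating_def dominating_def by blast
qed

lemma gamma_c_le_card:
  "connected_dominating V E D \<Longrightarrow> gamma_c V E \<le> card D"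
  unfolding gamma_c_def by (intro Least_le) blast

lemma gamma_c_attained:
  assumes "connected_dominating V E D"
  shows "\<exists>D'. connected_dominating V E D' \<and> card D' = gamma_c V E"
  unfolding gamma_c_def by (rule LeastI_ex) (use assms in blast)

lemma gamma_c_3_no_dominating_pair:
  assumes "gamma_c V E = 3" "a \<in> V" "b \<in> V" "a = b \<or> adj E a b"
  shows "\<not> pair_dominates E V a b"
proof
  assume "pair_dominates E V a b"
  then have "gamma_c V E \<le> card {a, b}"
    using assms(2-4) by (intro gamma_c_le_card connected_dominating_pair)
  also have "\<dots> \<le> 2"
    by (simp add: card_insert_if)
  finally show False
    using assms(1) by simp
qed

lemma gamma_c_less_3_dominating_pair:
  assumes "finite V" "connected_on E V" "gamma_c V E < 3"
  shows "\<exists>a\<in>V. \<exists>b\<in>V. (a = b \<or> adj E a b) \<and> pair_dominates E V a b"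
proof -
  have "connected_dominating V E V"
    using assms(2) by (simp add: connected_dominating_def dominating_def)
  then obtain D where D: "connected_dominating V E D" "card D < 3"
    using gamma_c_attained assms(3) by fastforce
  then have "D \<subseteq> V" "D \<noteq> {}" "connected_on E D" and dom: "\<forall>x\<in>V. x \<in> D \<or> (\<exists>d\<in>D. adj E x d)"
    unfolding connected_dominating_def dominating_def connected_on_def by blast+
  have "card D > 0"
    using \<open>D \<noteq> {}\<close> \<open>D \<subseteq> V\<close> assms(1) finite_subset card_gt_0_iff by blast
  then consider "card D = 1" | "card D = 2"
    using D(2) by linarith
  then show ?thesis
  proof cases
    case 1
    then obtain w where "D = {w}"
      by (auto simp: card_1_singleton_iff)
    then have "w \<in> V" "pair_dominates E V w w"
      using \<open>D \<subseteq> V\<close> dom by blast+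
    then show ?thesis
      by (intro bexI[of _ w]) simp_all
  next
    case 2
    then obtain a b where "D = {a, b}" "a \<noteq> b"
      by (auto simp: card_2_iff)
    then have "a \<in> V" "b \<in> V" "adj E a b" "pair_dominates E V a b"
      using \<open>D \<subseteq> V\<close> dom connected_on_doubleton_adj[of E a b] \<open>connected_on E D\<close> by auto
    then show ?thesis
      by (intro bexI[of _ a] bexI[of _ b]) simp_all
  qed
qed

(* {a, b} is a connected dominating set of G - v, and {u, t} one of G + uv other than {u, v};
   the non-adjacency conditions hold automatically once gamma_c G = 3. *)
abbreviation deletion_pair :: "'a set \<Rightarrow> 'a set set \<Rightarrow> 'a \<Rightarrow> 'a \<Rightarrow> 'a \<Rightarrow> bool" where
  "deletion_pair V E v a b \<equiv> a \<in> V \<and> b \<in> V \<and> a \<noteq> v \<and> b \<noteq> v \<and> adj E a b \<and>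
     \<not> adj E a v \<and> \<not> adj E b v \<and> pair_dominates E (V - {v}) a b"

abbreviation addition_pair :: "'a set \<Rightarrow> 'a set set \<Rightarrow> 'a \<Rightarrow> 'a \<Rightarrow> 'a \<Rightarrow> bool" where
  "addition_pair V E u v t \<equiv> t \<in> V \<and> adj E u t \<and> \<not> adj E v t \<and> pair_dominates E (V - {v}) u t"

lemma two_connected_has_neighbour:
  assumes "two_connected V E" "v \<in> V"
  shows "\<exists>u\<in>V. adj E v u"
proof -
  have "finite V" "card V \<ge> 3" "connected_on E V"
    using assms(1) by (auto simp: two_connected_def connected_graph_def simple_graph_def)
  then have "\<not> V \<subseteq> {v}"
    using card_mono[of "{v}" V] by auto
  then obtain w where "w \<in> V" "w \<noteq> v"
    by blast
  then show ?thesis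
    using connected_has_neighbour \<open>connected_on E V\<close> assms(2) by metis
qed

lemma vertex_critical_3_deletion_pair:
  assumes "vertex_critical 3 V E" "v \<in> V"
  shows "\<exists>a b. deletion_pair V E v a b"
proof -
  let ?E' = "del_vertex_edges E v"
  have "two_connected V E" "finite V" "gamma_c V E = 3"
    and "connected_on ?E' (V - {v})" "gamma_c (V - {v}) ?E' < 3"
    using assms by (auto simp: vertex_critical_def two_connected_def connected_graph_def simple_graph_def)
  then obtain a b where ab: "a \<in> V - {v}" "b \<in> V - {v}" "a = b \<or> adj ?E' a b"
    and dom': "pair_dominates ?E' (V - {v}) a b"
    using gamma_c_less_3_dominating_pair[of "V - {v}" ?E'] by blast
  have "a = b \<or> adj E a b" and dom: "pair_dominates E (V - {v}) a b"
    using ab(3) dom' by (auto simp: adj_del_vertex_edges)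
  have no_dom: "\<not> pair_dominates E V c d" if "c \<in> V" "d \<in> V" "c = d \<or> adj E c d" for c d
    using gamma_c_3_no_dominating_pair \<open>gamma_c V E = 3\<close> that by metis
  have dom_V: "pair_dominates E V c d"
    if "pair_dominates E (V - {v}) c d" "v = c \<or> v = d \<or> adj E v c \<or> adj E v d" for c d
    using that by (auto simp: adj_commute)
  have "\<not> adj E a v" "\<not> adj E b v"
    using no_dom[of a b] dom_V[OF dom] ab \<open>a = b \<or> adj E a b\<close> by (auto simp: adj_commute)
  moreover have "a \<noteq> b"
  proof
    assume "a = b"
    obtain u where u: "u \<in> V" "adj E v u"
      using two_connected_has_neighbour \<open>two_connected V E\<close> assms(2) by metis
    then have "u \<noteq> v" "u \<noteq> a"
      using not_adj_self \<open>\<not> adj E a v\<close> adj_commute by metis+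
    then have "adj E u a"
      using dom u(1) \<open>a = b\<close> by blast
    then have "adj E a u"
      by (simp add: adj_commute)
    moreover have "pair_dominates E V a u"
      using dom_V[of a u] dom u(2) \<open>a = b\<close> by blast
    ultimately show False
      using no_dom[of a u] ab(1) u(1) by blast
  qed
  ultimately show ?thesis
    using ab \<open>a = b \<or> adj E a b\<close> dom by blast
qed

lemma addition_pair_of_dominating_pair:
  assumes "gamma_c V E = 3" "u \<in> V" "u \<noteq> v" "b \<in> V" "b \<notin> {u, v}"
    and "adj (insert {u, v} E) u b" "pair_dominates (insert {u, v} E) V u b"
  shows "addition_pair V E u v b"
proof -
  have "adj E u b" and dom: "pair_dominates E (V - {v}) u b"
    using assms(3,5-7) by (auto simp: adj_insert_edge)
  moreover have "\<not> adj E v b"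
  proof
    assume "adj E v b"
    then have "pair_dominates E V u b"
      using dom by auto
    then show False
      using gamma_c_3_no_dominating_pair assms(1,2,4) \<open>adj E u b\<close> by metis
  qed
  ultimately show ?thesis
    using assms(4) by blast
qed

lemma edge_critical_3_addition:
  assumes "edge_critical 3 V E" "u \<in> V" "v \<in> V" "u \<noteq> v" "\<not> adj E u v"
  shows "pair_dominates E V u v \<or> (\<exists>t. addition_pair V E u v t) \<or> (\<exists>t. addition_pair V E v u t)"
proof -
  let ?E' = "insert {u, v} E"
  have adj': "adj ?E' x y \<longleftrightarrow> adj E x y \<or> (x = u \<and> y = v) \<or> (x = v \<and> y = u)" for x y
    using adj_insert_edge[OF assms(4)] .
  have "finite V" "connected_on E V" "gamma_c V E = 3" "gamma_c V ?E' < 3"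
    using assms by (auto simp: edge_critical_def connected_graph_def simple_graph_def)
  moreover have "connected_on ?E' V"
    using connected_on_mono \<open>connected_on E V\<close> adj' by metis
  ultimately obtain a b where ab: "a \<in> V" "b \<in> V" "a = b \<or> adj ?E' a b"
    and dom: "pair_dominates ?E' V a b"
    using gamma_c_less_3_dominating_pair[of V ?E'] by blast
  consider "a \<in> {u, v}" "b \<in> {u, v}" | "a \<notin> {u, v}" "b \<notin> {u, v}"
    | c d where "{c, d} = {a, b}" "c \<in> {u, v}" "d \<notin> {u, v}"
    by blast
  then show ?thesis
  proof cases
    case 1
    then have "pair_dominates E V u v"
      using dom by (auto simp: adj')
    then show ?thesis
      by blast
  next
    case 2
    then have "a = b \<or> adj E a b" "pair_dominates E V a b"
      using ab(3) dom by (auto simp: adj')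
    then show ?thesis
      using gamma_c_3_no_dominating_pair \<open>gamma_c V E = 3\<close> ab(1,2) by metis
  next
    case (3 c d)
    then have "c \<in> V" "d \<in> V" "adj ?E' c d" "pair_dominates ?E' V c d"
      using ab dom by (auto simp: doubleton_eq_iff adj_commute)
    obtain w where w: "{c, w} = {u, v}"
      using \<open>c \<in> {u, v}\<close> by (auto simp: insert_commute)
    then have "addition_pair V E c w d"
      using addition_pair_of_dominating_pair[of V E c w d] \<open>gamma_c V E = 3\<close> 3(3) assms(4)
        \<open>c \<in> V\<close> \<open>d \<in> V\<close> \<open>adj ?E' c d\<close> \<open>pair_dominates ?E' V c d\<close>
      by (metis doubleton_eq_iff)
    then show ?thesis
      using w by (auto simp: doubleton_eq_iff)
  qed
qed

locale max_3_vertex_critical =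
  fixes V :: "'a set" and E :: "'a set set"
  assumes finite_V: "finite V"
    and no_dominating_pair: "\<lbrakk>a \<in> V; b \<in> V; a = b \<or> adj E a b\<rbrakk> \<Longrightarrow> \<not> pair_dominates E V a b"
    and deletion_pair_exists: "v \<in> V \<Longrightarrow> \<exists>a b. deletion_pair V E v a b"
    and edge_addition: "\<lbrakk>u \<in> V; v \<in> V; u \<noteq> v; \<not> adj E u v\<rbrakk> \<Longrightarrow>
      pair_dominates E V u v \<or> (\<exists>t. addition_pair V E u v t) \<or> (\<exists>t. addition_pair V E v u t)"
    and has_neighbour: "v \<in> V \<Longrightarrow> \<exists>u\<in>V. adj E v u"

lemma maximal_vertex_critical_imp_max_3_vertex_critical:
  assumes "maximal_vertex_critical 3 V E"
  shows "max_3_vertex_critical V E"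
proof
  have ec: "edge_critical 3 V E" and vc: "vertex_critical 3 V E"
    using assms by (auto simp: maximal_vertex_critical_def)
  then have tc: "two_connected V E" and g3: "gamma_c V E = 3"
    by (auto simp: vertex_critical_def)
  then show "finite V"
    by (simp add: two_connected_def connected_graph_def simple_graph_def)
  show "\<not> pair_dominates E V a b" if "a \<in> V" "b \<in> V" "a = b \<or> adj E a b" for a b
    using gamma_c_3_no_dominating_pair[OF g3 that] .
  show "\<exists>a b. deletion_pair V E v a b" if "v \<in> V" for v
    using vertex_critical_3_deletion_pair[OF vc that] .
  show "pair_dominates E V u v \<or> (\<exists>t. addition_pair V E u v t) \<or> (\<exists>t. addition_pair V E v u t)"
    if "u \<in> V" "v \<in> V" "u \<noteq> v" "\<not> adj E u v" for u v
    using edge_critical_3_addition[OF ec that] .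
  show "\<exists>u\<in>V. adj E v u" if "v \<in> V" for v
    using two_connected_has_neighbour[OF tc that] .
qed

context max_3_vertex_critical
begin

lemma deletion_pair_towards:
  assumes "v \<in> V" "w \<in> V" "w \<noteq> v"
  shows "\<exists>a b. deletion_pair V E v a b \<and> (w = a \<or> (w \<noteq> b \<and> adj E w a))"
proof -
  obtain a b where ab: "deletion_pair V E v a b"
    using deletion_pair_exists assms(1) by blast
  then have ba: "deletion_pair V E v b a"
    by (auto simp: adj_commute)
  have "w = a \<or> w = b \<or> adj E w a \<or> adj E w b"
    using ab assms(2,3) by blast
  then show ?thesis
    using ab ba by blast
qed

lemma exists_neighbour_nonadjacent:
  assumes "y \<in> V" "t \<in> V" "adj E y t"
  shows "\<exists>x\<in>V. adj E y x \<and> x \<noteq> t \<and> \<not> adj E x t"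
proof -
  have "y \<noteq> t"
    using assms(3) not_adj_self by metis
  then obtain a b where ab: "deletion_pair V E t a b" "y = a \<or> adj E y a"
    using deletion_pair_towards assms by blast
  moreover have "y \<noteq> a"
    using ab(1) assms(3) adj_commute by metis
  ultimately show ?thesis
    by blast
qed

lemma neighbourhood_not_clique:
  assumes "y \<in> V"
  shows "\<exists>x\<in>V. \<exists>x'\<in>V. adj E y x \<and> adj E y x' \<and> x \<noteq> x' \<and> \<not> adj E x x'"
  using has_neighbour[OF assms] exists_neighbour_nonadjacent[OF assms] by blast

lemma common_neighbour_of_dominating_edge:
  assumes "y \<in> V" "k \<in> V" "adj E y k" "pair_dominates E (V - {z}) y k"
    and indep: "\<And>x x'. \<lbrakk>x \<in> V; x' \<in> V; adj E y x; adj E y x'\<rbrakk> \<Longrightarrow> \<not> adj E x x'"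
  shows "\<exists>x\<in>V. adj E y x \<and> adj E x z"
proof -
  have "y \<noteq> k"
    using assms(3) not_adj_self by metis
  then obtain a b where ab: "deletion_pair V E k a b" "y = a \<or> (y \<noteq> b \<and> adj E y a)"
    using deletion_pair_towards assms(1-2) by metis
  moreover have "y \<noteq> a"
    using ab(1) assms(3) adj_commute by metis
  ultimately have "adj E y a" "y \<noteq> b"
    by blast+
  then have "\<not> adj E y b" "\<not> adj E b y"
    using indep ab(1) adj_commute by metis+
  then have "b \<notin> V - {z}"
    using assms(4) ab(1) \<open>y \<noteq> b\<close> by auto
  then have "b = z"
    using ab(1) by blast
  then show ?thesis
    using ab(1) \<open>adj E y a\<close> by blast
qed

lemma independent_neighbourhood_common_neighbour:
  assumes "y \<in> V" "z \<in> V" "z \<noteq> y" "\<not> adj E y z"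
    and indep: "\<And>x x'. \<lbrakk>x \<in> V; x' \<in> V; adj E y x; adj E y x'\<rbrakk> \<Longrightarrow> \<not> adj E x x'"
  shows "\<exists>x\<in>V. adj E y x \<and> adj E x z"
  using edge_addition[OF assms(1,2) assms(3)[symmetric] assms(4)]
proof (elim disjE exE)
  assume dom: "pair_dominates E V y z"
  obtain a b where ab: "deletion_pair V E z a b" "y = a \<or> (y \<noteq> b \<and> adj E y a)"
    using deletion_pair_towards assms(1-3) by metis
  show ?thesis
  proof (cases "y = a")
    case True
    then show ?thesis
      using common_neighbour_of_dominating_edge[of y b z] ab(1) assms(1) indep by blast
  next
    case False
    then have "\<not> adj E b y" "b \<noteq> y"
      using ab indep adj_commute by metis+
    then have False
      using dom ab(1) by auto
    then show ?thesis ..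
  qed
next
  fix t
  assume "addition_pair V E y z t"
  then show ?thesis
    using common_neighbour_of_dominating_edge[of y t z] assms(1) indep by blast
next
  fix s
  assume s: "addition_pair V E z y s"
  then have "y \<noteq> s"
    using assms(4) adj_commute by metis
  then obtain a b where ab: "deletion_pair V E s a b" "y = a \<or> adj E y a"
    using deletion_pair_towards s assms(1) by metis
  obtain k where k: "k \<in> V" "adj E y k" "\<not> adj E k s"
  proof (cases "y = a")
    case True
    then show ?thesis
      using that[of b] ab(1) by blast
  next
    case False
    then show ?thesis
      using that[of a] ab by blast
  qed
  moreover have "k \<noteq> y" "k \<noteq> s" "k \<noteq> z"
    using k(2) s assms(4) not_adj_self by metis+
  ultimately have "adj E k z"
    using s by auto
  then show ?thesis
    using k(1,2) by blast
qed

end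

locale max_3_vertex_critical_independent = max_3_vertex_critical +
  fixes y :: 'a and I :: "'a set"
  assumes y_in_V: "y \<in> V" and independent_I: "independent V E I"
begin

definition nbhd :: "'a set" where
  "nbhd = {u \<in> V. adj E y u}"

definition near :: "'a set" where
  "near = I \<inter> nbhd"

definition far :: "'a set" where
  "far = I - nbhd - {y}"

definition private_nbrs :: "'a \<Rightarrow> 'a set" where
  "private_nbrs w = {t \<in> nbhd - I. \<not> adj E t w \<and> (\<forall>i\<in>far - {w}. adj E t i)}"

definition served :: "'a set" where
  "served = {w \<in> far. private_nbrs w \<noteq> {}}"

definition rep :: "'a \<Rightarrow> 'a" where
  "rep w = (SOME t. t \<in> private_nbrs w)"

definition reps :: "'a set" where
  "reps = rep ` served"

lemma I_subset_V: "I \<subseteq> V"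
  using independent_I by (simp add: independent_def)

lemma I_not_adj: "u \<in> I \<Longrightarrow> v \<in> I \<Longrightarrow> \<not> adj E u v"
  using independent_I by (simp add: independent_def)

lemma in_nbhd_iff: "u \<in> nbhd \<longleftrightarrow> u \<in> V \<and> adj E y u"
  by (simp add: nbhd_def)

lemma in_far_iff: "z \<in> far \<longleftrightarrow> z \<in> I \<and> z \<noteq> y \<and> \<not> adj E y z"
  using I_subset_V by (auto simp: far_def nbhd_def)

lemma finite_nbhd: "finite nbhd"
  using finite_V by (simp add: nbhd_def)

lemma private_nbrs_disjoint:
  "\<lbrakk>w \<in> far; w' \<in> far; t \<in> private_nbrs w; t \<in> private_nbrs w'\<rbrakk> \<Longrightarrow> w = w'"
  by (auto simp: private_nbrs_def)

lemma rep_in_private_nbrs: "w \<in> served \<Longrightarrow> rep w \<in> private_nbrs w"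
  unfolding served_def rep_def by (auto intro: someI)

lemma inj_on_rep: "inj_on rep served"
  by (rule inj_onI) (metis rep_in_private_nbrs private_nbrs_disjoint mem_Collect_eq served_def)

lemma card_reps: "card reps = card served"
  by (simp add: reps_def card_image inj_on_rep)

lemma reps_subset: "reps \<subseteq> nbhd - I"
  using rep_in_private_nbrs by (auto simp: reps_def private_nbrs_def)

lemma private_nbr_in_reps_eq_rep:
  assumes "w \<in> far" "t \<in> private_nbrs w" "t \<in> reps"
  shows "t = rep w"
proof -
  obtain u where u: "u \<in> served" "t = rep u"
    using assms(3) by (auto simp: reps_def)
  then have "u = w"
    using private_nbrs_disjoint[of u w t] rep_in_private_nbrs assms(1,2) by (auto simp: served_def)
  then show ?thesis
    using u(2) by simp
qed

lemma private_nbr_of_addition_pair: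
  assumes "z \<in> far" "w \<in> far" "z \<noteq> w" "addition_pair V E z w t"
  shows "t \<in> private_nbrs w"
proof -
  have "y \<noteq> w" "y \<noteq> z" "\<not> adj E y z"
    using assms(1,2) in_far_iff by metis+
  moreover have "y \<noteq> t"
    using assms(4) \<open>\<not> adj E y z\<close> adj_commute by metis
  ultimately have "adj E y t"
    using assms(4) y_in_V by blast
  moreover have "t \<notin> I"
    using assms(1,4) I_not_adj in_far_iff by metis
  moreover have "adj E t i" if "i \<in> far - {w}" for i
  proof -
    have "i \<noteq> z \<longrightarrow> \<not> adj E i z" "i \<noteq> t" "i \<in> V"
      using that assms(1) \<open>t \<notin> I\<close> I_not_adj I_subset_V in_far_iff by blast+
    then have "adj E i t"
      using that assms(4) by auto
    then show ?thesis
      using adj_commute by metis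
  qed
  ultimately show ?thesis
    using assms(4) by (auto simp: private_nbrs_def nbhd_def adj_commute)
qed

lemma far_pair_addition:
  assumes "z \<in> far" "w \<in> far" "z \<noteq> w"
  shows "(\<exists>t. addition_pair V E z w t) \<or> (\<exists>t. addition_pair V E w z t)"
proof -
  have "z \<in> V" "w \<in> V" "\<not> adj E z w"
    using assms I_subset_V I_not_adj in_far_iff by auto
  moreover have "\<not> pair_dominates E V z w"
    using assms(1,2) y_in_V in_far_iff adj_commute by metis
  ultimately show ?thesis
    using edge_addition assms(3) by blast
qed

lemma served_or_served:
  assumes "z \<in> far" "w \<in> far" "z \<noteq> w"
  shows "z \<in> served \<or> w \<in> served"
  using far_pair_addition[OF assms] private_nbr_of_addition_pair assms
  unfolding served_def by blast

lemma addition_pair_from_unserved: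
  assumes "u \<in> far - served" "z \<in> far" "z \<noteq> u"
  shows "\<exists>t. addition_pair V E u z t"
  using far_pair_addition[of u z] private_nbr_of_addition_pair[of z u] assms
  unfolding served_def by blast

lemma reps_adjacent:
  assumes "nbhd - I \<subseteq> reps" "z \<in> served" "w \<in> served" "z \<noteq> w"
  shows "adj E (rep z) (rep w)"
proof -
  have "adj E (rep z') (rep w')"
    if zw': "z' \<in> served" "w' \<in> served" "z' \<noteq> w'" and t: "addition_pair V E z' w' t" for z' w' t
  proof -
    have "z' \<in> far" "w' \<in> far"
      using zw' by (auto simp: served_def)
    then have "t \<in> private_nbrs w'"
      using private_nbr_of_addition_pair zw'(3) t by blast
    then have "t = rep w'"
      using private_nbr_in_reps_eq_rep assms(1) \<open>w' \<in> far\<close> by (auto simp: private_nbrs_def)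
    moreover have "rep z' \<in> V - {w'}" "rep z' \<noteq> z'" "\<not> adj E (rep z') z'" "rep z' \<noteq> rep w'"
      using rep_in_private_nbrs[OF zw'(1)] \<open>z' \<in> far\<close> \<open>w' \<in> far\<close> zw' inj_on_rep
      by (auto simp: private_nbrs_def nbhd_def far_def inj_on_def)
    ultimately show ?thesis
      using t by auto
  qed
  moreover have "z \<in> far" "w \<in> far"
    using assms(2,3) by (auto simp: served_def)
  ultimately show ?thesis
    using far_pair_addition assms(2-4) adj_commute by metis
qed

lemma reps_ne_nbhd: "reps \<noteq> nbhd"
proof
  assume eq: "reps = nbhd"
  obtain x x' where x: "x \<in> V" "x' \<in> V" "adj E y x" "adj E y x'" "x \<noteq> x'" "\<not> adj E x x'"
    using neighbourhood_not_clique y_in_V by blast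
  then have "x \<in> reps" "x' \<in> reps"
    using eq by (auto simp: nbhd_def)
  then obtain z w where "z \<in> served" "w \<in> served" "x = rep z" "x' = rep w"
    unfolding reps_def by blast
  then show False
    using reps_adjacent[of z w] eq x(5,6) by blast
qed

lemma near_reps_ne_nbhd:
  assumes "u \<in> far - served"
  shows "near \<union> reps \<noteq> nbhd"
proof
  assume eq: "near \<union> reps = nbhd"
  have u: "u \<in> V" "u \<in> I" "u \<noteq> y" "\<not> adj E y u"
    using assms in_far_iff I_subset_V by auto
  show False
  proof (cases "served = {}")
    case True
    then have "nbhd \<subseteq> I"
      using eq by (auto simp: reps_def near_def)
    then have "\<not> (\<exists>x\<in>V. adj E y x \<and> adj E x u)"
      using I_not_adj u(2) in_nbhd_iff by blast
    moreover have "\<not> adj E x x'" if "x \<in> V" "x' \<in> V" "adj E y x" "adj E y x'" for x x'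
      using that \<open>nbhd \<subseteq> I\<close> I_not_adj in_nbhd_iff by blast
    ultimately show False
      using independent_neighbourhood_common_neighbour[OF y_in_V u(1,3,4)] by blast
  next
    case False
    then obtain z where z: "z \<in> served"
      by blast
    then have "z \<in> far" "z \<noteq> u"
      using assms by (auto simp: served_def)
    have a: "rep z \<in> private_nbrs z"
      using rep_in_private_nbrs[OF z] .
    then obtain x where x: "x \<in> V" "adj E y x" "x \<noteq> rep z" "\<not> adj E x (rep z)"
      using exists_neighbour_nonadjacent[OF y_in_V] by (auto simp: private_nbrs_def nbhd_def)
    then have "x \<in> near \<union> reps"
      using eq by (simp add: nbhd_def)
    then show False
    proof
      assume "x \<in> near"
      obtain t where t: "addition_pair V E u z t"
        using addition_pair_from_unserved assms \<open>z \<in> far\<close> \<open>z \<noteq> u\<close> by blast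
      then have "t \<in> private_nbrs z"
        using private_nbr_of_addition_pair assms \<open>z \<in> far\<close> \<open>z \<noteq> u\<close> by blast
      moreover have "nbhd - I \<subseteq> reps"
        using eq by (auto simp: near_def)
      ultimately have "t = rep z"
        using private_nbr_in_reps_eq_rep \<open>z \<in> far\<close> by (auto simp: private_nbrs_def)
      moreover have "x \<noteq> z" "x \<noteq> u" "\<not> adj E x u"
        using \<open>x \<in> near\<close> \<open>z \<in> far\<close> u(2,4) I_not_adj by (auto simp: near_def in_far_iff in_nbhd_iff)
      ultimately show False
        using t x by auto
    next
      assume "x \<in> reps"
      then obtain w where "w \<in> served" "x = rep w"
        by (auto simp: reps_def)
      moreover have "nbhd - I \<subseteq> reps"
        using eq by (auto simp: near_def)
      ultimately show False
        using reps_adjacent[of w z] z x(3,4) by blast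
    qed
  qed
qed

lemma exists_nbhd_nonadjacent_unserved:
  assumes "y \<in> I" "u \<in> far - served"
  shows "\<exists>x\<in>nbhd. \<not> adj E x u"
proof -
  have u: "u \<in> V" "u \<noteq> y"
    using assms(2) in_far_iff I_subset_V by auto
  then obtain a b where ab: "deletion_pair V E u a b" "y = a \<or> adj E y a"
    using deletion_pair_towards y_in_V by metis
  have "y \<noteq> a"
  proof
    assume "y = a"
    then have "adj E y b" "b \<in> V" "\<not> adj E b u"
      using ab(1) by auto
    then have "b \<in> nbhd - I"
      using assms(1) I_not_adj in_nbhd_iff by blast
    moreover have "adj E b i" if "i \<in> far - {u}" for i
    proof -
      have "i \<in> V - {u}" "i \<noteq> y" "i \<noteq> b"
        using that \<open>b \<in> nbhd - I\<close> I_subset_V in_far_iff by auto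
      moreover have "\<not> adj E i y"
        using that in_far_iff adj_commute by (metis DiffD1)
      ultimately have "adj E i b"
        using ab(1) \<open>y = a\<close> by auto
      then show ?thesis
        using adj_commute by metis
    qed
    ultimately have "b \<in> private_nbrs u"
      using \<open>\<not> adj E b u\<close> by (auto simp: private_nbrs_def)
    then show False
      using assms(2) by (auto simp: served_def)
  qed
  then show ?thesis
    using ab by (auto simp: nbhd_def)
qed

lemma far_eq_served_or_insert:
  "served = far \<or> (\<exists>u. u \<in> far - served \<and> far = insert u served)"
proof (cases "far - served = {}")
  case True
  then show ?thesis
    by (auto simp: served_def)
next
  case False
  then obtain u where u: "u \<in> far - served"
    by blast
  then have "far = insert u served"
    using served_or_served by (auto simp: served_def)
  then show ?thesis
    using u by blast
qed

lemma finite_reps: "finite reps"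
  using reps_subset finite_nbhd finite_subset by blast

lemma card_served_add_2_le_card_nbhd:
  assumes "y \<in> I" "u \<in> far - served"
  shows "card served + 2 \<le> card nbhd"
proof -
  obtain x where x: "x \<in> nbhd" "\<not> adj E x u"
    using exists_nbhd_nonadjacent_unserved[OF assms] by blast
  have "adj E r u" if r: "r \<in> reps" for r
  proof -
    obtain z where "z \<in> served" "r = rep z"
      using r by (auto simp: reps_def)
    moreover from this have "u \<in> far - {z}"
      using assms(2) by auto
    ultimately show ?thesis
      using rep_in_private_nbrs by (auto simp: private_nbrs_def)
  qed
  then have "x \<notin> reps"
    using x(2) by blast
  have "insert x reps \<noteq> nbhd"
  proof
    assume eq: "insert x reps = nbhd"
    obtain x' where x': "x' \<in> V" "adj E y x'" "x' \<noteq> x" "\<not> adj E x' x"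
      using exists_neighbour_nonadjacent y_in_V x(1) in_nbhd_iff by blast
    then obtain z where z: "z \<in> served" "x' = rep z"
      using eq in_nbhd_iff by (auto simp: reps_def)
    then have "z \<in> far" "z \<noteq> u"
      using assms(2) by (auto simp: served_def)
    then obtain t where t: "addition_pair V E u z t"
      using addition_pair_from_unserved assms(2) by blast
    then have "t \<in> private_nbrs z"
      using private_nbr_of_addition_pair assms(2) \<open>z \<in> far\<close> \<open>z \<noteq> u\<close> by blast
    moreover have "t \<noteq> x"
      using t x(2) adj_commute by metis
    ultimately have "t = x'"
      using eq private_nbr_in_reps_eq_rep \<open>z \<in> far\<close> z(2) by (auto simp: private_nbrs_def)
    moreover have "x \<in> V - {z}" "x \<noteq> u"
      using x(1) \<open>z \<in> far\<close> assms(2) by (auto simp: in_nbhd_iff in_far_iff)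
    ultimately have "adj E x t"
      using t x(2) x'(3) by auto
    then show False
      using \<open>t = x'\<close> x'(4) adj_commute by metis
  qed
  moreover have "insert x reps \<subseteq> nbhd"
    using x(1) reps_subset by blast
  ultimately have "card (insert x reps) < card nbhd"
    using finite_nbhd psubset_card_mono by blast
  then show ?thesis
    using \<open>x \<notin> reps\<close> finite_reps card_reps by simp
qed

lemma card_I_eq: "card I = card near + card far + (if y \<in> I then 1 else 0)"
proof -
  have "finite I"
    using I_subset_V finite_V finite_subset by blast
  then have "finite near" "finite far"
    by (auto simp: near_def far_def)
  have "I = (near \<union> far) \<union> (I \<inter> {y})" "near \<inter> far = {}" "(near \<union> far) \<inter> (I \<inter> {y}) = {}"
    by (auto simp: near_def far_def nbhd_def not_adj_self)
  then have "card I = card (near \<union> far) + card (I \<inter> {y})"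
    using \<open>finite I\<close> \<open>finite near\<close> \<open>finite far\<close> card_Un_disjoint[of "near \<union> far" "I \<inter> {y}"] by auto
  also have "card (near \<union> far) = card near + card far"
    using \<open>finite near\<close> \<open>finite far\<close> \<open>near \<inter> far = {}\<close> card_Un_disjoint by blast
  finally show ?thesis
    by simp
qed

lemma card_near_reps: "card (near \<union> reps) = card near + card served"
proof -
  have "near \<inter> reps = {}" "finite near"
    using reps_subset finite_nbhd by (auto simp: near_def)
  then show ?thesis
    using card_Un_disjoint[of near reps] finite_reps card_reps by simp
qed

lemma card_I_le_card_nbhd: "card I \<le> card nbhd"
proof -
  have sub: "near \<union> reps \<subseteq> nbhd"
    using reps_subset by (auto simp: near_def)
  have near_empty: "near = {}" if "y \<in> I"
    using that I_not_adj by (auto simp: near_def nbhd_def)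
  consider "served = far" | u where "u \<in> far - served" "far = insert u served"
    using far_eq_served_or_insert by blast
  then show ?thesis
  proof cases
    case 1
    show ?thesis
    proof (cases "y \<in> I")
      case True
      have "card reps < card nbhd"
        using reps_ne_nbhd reps_subset finite_nbhd psubset_card_mono by blast
      then show ?thesis
        using card_I_eq 1 True near_empty card_reps by simp
    next
      case False
      then show ?thesis
        using card_I_eq 1 card_near_reps card_mono[OF finite_nbhd sub] by simp
    qed
  next
    case (2 u)
    have "finite served"
      using finite_reps inj_on_rep finite_imageD by (auto simp: reps_def)
    then have card_far: "card far = card served + 1"
      using 2 by simp
    show ?thesis
    proof (cases "y \<in> I")
      case True
      then show ?thesis
        using card_I_eq card_far near_empty card_served_add_2_le_card_nbhd[OF True 2(1)] by simp
    next
      case False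
      have "card (near \<union> reps) < card nbhd"
        using near_reps_ne_nbhd[OF 2(1)] sub finite_nbhd psubset_card_mono by blast
      then show ?thesis
        using card_I_eq False card_far card_near_reps by simp
    qed
  qed
qed

end

lemma independence_number_le:
  assumes "finite V" "\<And>I. independent V E I \<Longrightarrow> card I \<le> k"
  shows "independence_number V E \<le> k"
proof -
  have "{card I | I. independent V E I} \<subseteq> card ` Pow V"
    unfolding independent_def by blast
  then have "finite {card I | I. independent V E I}"
    by (rule finite_surj[OF finite_Pow_iff[THEN iffD2, OF assms(1)]])
  moreover have "independent V E {}"
    by (simp add: independent_def)
  ultimately show ?thesis
    unfolding independence_number_def using assms(2) by (subst Max_le_iff) auto
qed

lemma min_degree_attained:
  assumes "finite V" "V \<noteq> {}"
  shows "\<exists>y\<in>V. min_degree V E = degree V E y"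
proof -
  have "Min (degree V E ` V) \<in> degree V E ` V"
    using assms by (intro Min_in) auto
  then show ?thesis
    by (auto simp: min_degree_def)
qed

theorem theorem3p3:
  fixes V :: "'a set" and E :: "'a set set"
  assumes "maximal_vertex_critical 3 V E"
  shows "independence_number V E \<le> min_degree V E"
proof -
  interpret max_3_vertex_critical V E
    using maximal_vertex_critical_imp_max_3_vertex_critical[OF assms] .
  have "card V \<ge> 3"
    using assms by (simp add: maximal_vertex_critical_def vertex_critical_def two_connected_def)
  then have "V \<noteq> {}"
    by auto
  then obtain y where y: "y \<in> V" "min_degree V E = degree V E y"
    using min_degree_attained finite_V by blast
  have "card I \<le> degree V E y" if "independent V E I" for I
  proof -
    interpret max_3_vertex_critical_independent V E y I
      using y(1) that by unfold_locales
    show ?thesis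
      using card_I_le_card_nbhd by (simp add: degree_def nbhd_def)
  qed
  then show ?thesis
    using independence_number_le[OF finite_V] y(2) by simp
qed

end
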